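(* Consider CAV $i$ and CAV $i-1$ on different roads, in the safe-merging setting of the context, under (A1), (SA) and (A4). Assume $v_i\ge0$ at all times and $u_{\min}\le0$. Suppose that at each sampling time $t$ the control applied on $[t,t+\Delta t)$ is a feasible point of QP$_2(t)$ whenever QP$_2(t)$ is feasible. Then QP$_2(t_i^0+k\Delta t)$ is feasible for every integer $k\ge0$ with $[t_i^0+k\Delta t,\,t_i^0+(k+1)\Delta t]\subset[t_i^0,t_i^m]$.
   Context: **Vehicle model and times.** The vehicle dynamics are $\dot x_i=v_i$ and $\dot v_i=u_i$, where $x_i\in[0,L]$ is the distance travelled by CAV $i$ from the origin of its road, $v_i$ its speed and $u_i$ its acceleration (the control). The merging point is at position $L>0$ on each road. CAV $i$ enters at time $t_i^0$ and reaches the merging point at time $t_i^m$. CAV $i-1$ is the CAV immediately ahead of $i$ in the first-in-first-out crossing order, on the other road, with position $x_{i-1}$, speed $v_{i-1}$ and acceleration $u_{i-1}$, all known to CAV $i$. Let $z_{i,i-1}=x_{i-1}-x_i$, let $\varphi>0$, $\delta$ and $k_2>0$ be constants, and let $\varphi_2=\varphi/L$. **Control bounds.** Control bounds are $u_{\min}\le u_i\le u_{i,\max}$ with $u_{\min}<0<u_{i,\max}$. **(A1) Common minimum acceleration.** All CAVs share the same minimum acceleration $u_{\min}$. In particular $u_{i-1}(t)\ge u_{\min}$ for all $t$. **Functions of time:** - Merging safety function: $b_2=z_{i,i-1}-\varphi_2x_iv_i-\delta$. - CBF constraint: $b_{\mathrm{cbf}_2}(u_i)=v_{i-1}-v_i-\varphi_2v_i^2-\varphi_2x_iu_i+k_2b_2\ge0$.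 - Feasibility function: $b_F=v_{i-1}-v_i-\varphi_2v_i^2+k_2b_2-\varphi_2x_iu_{\min}$. - Auxiliary function: $b_{\eta_2}=v_{i-1}-v_i-\varphi_2v_i^2-\varphi_2x_iu_{\min}$. - Feasibility constraint: $\eta_2(u_i)=u_{i-1}-u_i-2\varphi_2v_iu_i-\varphi_2v_iu_{\min}+k_2 b_{\eta_2}\ge0$. Note that $\eta_2=\dot b_{\eta_2}+k_2b_{\eta_2}$ and $\dot b_F+k_2b_F=\eta_2+k_2b_{\mathrm{cbf}_2}$. **QP$_2(t)$.** QP$_2(t)$ is the quadratic program in the variables $(u_i,e_i)$ that minimizes $\beta e_i^2+\tfrac12(u_i-u_{\mathrm{ref}}(t))^2$ subject to: - $b_{\mathrm{cbf}_2}(u_i)\ge0$, - $u_{\min}\le u_i\le u_{i,\max}$, - $\eta_2(u_i)\ge0$, - a control Lyapunov constraint $c_1(t)+c_2(t)u_i\le e_i$ with a free slack variable $e_i$. All quantities are evaluated at time $t$. "Feasible" means the constraint set is nonempty. **(SA) Sampling / forward invariance.** The control is held constant on each $[t,t+\Delta t)$, and $\Delta t$ is small enough that for each $b\in\{b_2,b_F,b_{\eta_2}\}$: if $b(t)\ge0$ and $\dot b(t)+k_2b(t)\ge0$ under the applied controls, then $b(t+\Delta t)\ge0$. **(A4) Initial conditions.** $b_2(t_i^0)\ge0$, $b_F(t_i^0)\ge0$ and $b_{\eta_2}(t_i^0)\ge0$, where $b_F$ is the merging feasibility function above. *)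

theory Defs
  imports Complex_Main
begin

text \<open>Safe-merging quantities. Arguments: phi2 = phi/L, delta, k2, umin,
  xi, vi = position/speed of CAV i; xp, vp, up = position/speed/acceleration of CAV i-1;
  u = candidate control of CAV i.\<close>

definition merge_b2 :: "real \<Rightarrow> real \<Rightarrow> real \<Rightarrow> real \<Rightarrow> real \<Rightarrow> real \<Rightarrow> real" where
  "merge_b2 phi2 delta xi vi xp vp = (xp - xi) - phi2 * xi * vi - delta"

definition b_cbf2 :: "real \<Rightarrow> real \<Rightarrow> real \<Rightarrow> real \<Rightarrow> real \<Rightarrow> real \<Rightarrow> real \<Rightarrow> real \<Rightarrow> real" where
  "b_cbf2 phi2 delta k2 xi vi xp vp u =
     vp - vi - phi2 * vi\<^sup>2 - phi2 * xi * u + k2 * merge_b2 phi2 delta xi vi xp vp"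

definition b_F :: "real \<Rightarrow> real \<Rightarrow> real \<Rightarrow> real \<Rightarrow> real \<Rightarrow> real \<Rightarrow> real \<Rightarrow> real \<Rightarrow> real" where
  "b_F phi2 delta k2 umin xi vi xp vp =
     vp - vi - phi2 * vi\<^sup>2 + k2 * merge_b2 phi2 delta xi vi xp vp - phi2 * xi * umin"

definition b_eta2 :: "real \<Rightarrow> real \<Rightarrow> real \<Rightarrow> real \<Rightarrow> real \<Rightarrow> real" where
  "b_eta2 phi2 umin xi vi vp = vp - vi - phi2 * vi\<^sup>2 - phi2 * xi * umin"

definition eta2 :: "real \<Rightarrow> real \<Rightarrow> real \<Rightarrow> real \<Rightarrow> real \<Rightarrow> real \<Rightarrow> real \<Rightarrow> real \<Rightarrow> real" where
  "eta2 phi2 k2 umin xi vi vp up u =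
     up - u - 2 * phi2 * vi * u - phi2 * vi * umin + k2 * b_eta2 phi2 umin xi vi vp"

definition QP2_constraints ::
  "real \<Rightarrow> real \<Rightarrow> real \<Rightarrow> real \<Rightarrow> real \<Rightarrow> real \<Rightarrow> real \<Rightarrow>
   real \<Rightarrow> real \<Rightarrow> real \<Rightarrow> real \<Rightarrow> real \<Rightarrow> real \<Rightarrow> real \<Rightarrow> bool" where
  "QP2_constraints phi2 delta k2 umin umax c1 c2 xi vi xp vp up u e \<longleftrightarrow>
     b_cbf2 phi2 delta k2 xi vi xp vp u \<ge> 0 \<and>
     umin \<le> u \<and> u \<le> umax \<and>
     eta2 phi2 k2 umin xi vi vp up u \<ge> 0 \<and>
     c1 + c2 * u \<le> e"

definition QP2_feasible ::
  "real \<Rightarrow> real \<Rightarrow> real \<Rightarrow> real \<Rightarrow> real \<Rightarrow> real \<Rightarrow> real \<Rightarrow>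
   real \<Rightarrow> real \<Rightarrow> real \<Rightarrow> real \<Rightarrow> real \<Rightarrow> bool" where
  "QP2_feasible phi2 delta k2 umin umax c1 c2 xi vi xp vp up \<longleftrightarrow>
     (\<exists>u e. QP2_constraints phi2 delta k2 umin umax c1 c2 xi vi xp vp up u e)"

end

theory Submission
  imports Defs
begin

text \<open>The control u = u_min is feasible for QP_2 as soon as b_F \<ge> 0 and b_eta2 \<ge> 0: the
  CBF constraint at u_min is b_F itself, and the feasibility constraint follows from (A1).
  So it suffices to keep b_F and b_eta2 nonnegative at the sampling times. Along the dynamics
  eta2 = b_eta2' + k2 b_eta2 and b_F' + k2 b_F = eta2 + k2 b_cbf2, so any applied feasible
  control satisfies the barrier conditions of both functions, and (SA) carries their
  nonnegativity to the next sampling time.\<close>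

lemma b_cbf2_umin_eq_b_F:
  "b_cbf2 p delta k2 xi vi xp vp umin = b_F p delta k2 umin xi vi xp vp"
  unfolding b_cbf2_def b_F_def by simp

lemma QP2_feasible_umin:
  assumes "p \<ge> 0" "k2 \<ge> 0" "umin \<le> 0" "umin \<le> umax" "umin \<le> up" "vi \<ge> 0"
    and "b_F p delta k2 umin xi vi xp vp \<ge> 0" "b_eta2 p umin xi vi vp \<ge> 0"
  shows "QP2_feasible p delta k2 umin umax c1 c2 xi vi xp vp up"
proof -
  have "p * vi * umin \<le> 0"
    using assms by (simp add: mult_nonneg_nonpos)
  moreover have "k2 * b_eta2 p umin xi vi vp \<ge> 0"
    using assms by simp
  ultimately have "eta2 p k2 umin xi vi vp up umin \<ge> 0"
    using \<open>umin \<le> up\<close> unfolding eta2_def by linarith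
  then have "QP2_constraints p delta k2 umin umax c1 c2 xi vi xp vp up umin (c1 + c2 * umin)"
    using assms unfolding QP2_constraints_def b_cbf2_umin_eq_b_F by simp
  then show ?thesis
    unfolding QP2_feasible_def by blast
qed

lemma b_eta2_has_real_derivative:
  assumes "(xi has_real_derivative vi t) (at t within S)"
    and "(vi has_real_derivative u) (at t within S)"
    and "(vp has_real_derivative up t) (at t within S)"
  shows "((\<lambda>s. b_eta2 p umin (xi s) (vi s) (vp s)) has_real_derivative
           eta2 p k umin (xi t) (vi t) (vp t) (up t) u - k * b_eta2 p umin (xi t) (vi t) (vp t))
         (at t within S)"
  unfolding b_eta2_def eta2_def
  by (rule derivative_eq_intros assms refl)+ (simp add: power2_eq_square algebra_simps)

lemma b_F_has_real_derivative:
  assumes "(xi has_real_derivative vi t) (at t within S)"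
    and "(vi has_real_derivative u) (at t within S)"
    and "(xp has_real_derivative vp t) (at t within S)"
    and "(vp has_real_derivative up t) (at t within S)"
  shows "((\<lambda>s. b_F p delta k umin (xi s) (vi s) (xp s) (vp s)) has_real_derivative
           eta2 p k umin (xi t) (vi t) (vp t) (up t) u
           + k * b_cbf2 p delta k (xi t) (vi t) (xp t) (vp t) u
           - k * b_F p delta k umin (xi t) (vi t) (xp t) (vp t))
         (at t within S)"
  unfolding b_F_def b_cbf2_def eta2_def b_eta2_def merge_b2_def
  by (rule derivative_eq_intros assms refl)+ (simp add: power2_eq_square algebra_simps)

lemma QP2_constraints_imp_barrier_conditions:
  assumes "(xi has_real_derivative vi t) (at t within S)"
    and "(vi has_real_derivative u) (at t within S)"
    and "(xp has_real_derivative vp t) (at t within S)"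
    and "(vp has_real_derivative up t) (at t within S)"
    and "QP2_constraints p delta k2 umin umax c1 c2 (xi t) (vi t) (xp t) (vp t) (up t) u e"
    and "k2 \<ge> 0"
  obtains dF deta where
    "((\<lambda>s. b_F p delta k2 umin (xi s) (vi s) (xp s) (vp s)) has_real_derivative dF) (at t within S)"
    "dF + k2 * b_F p delta k2 umin (xi t) (vi t) (xp t) (vp t) \<ge> 0"
    "((\<lambda>s. b_eta2 p umin (xi s) (vi s) (vp s)) has_real_derivative deta) (at t within S)"
    "deta + k2 * b_eta2 p umin (xi t) (vi t) (vp t) \<ge> 0"
proof -
  have constraints: "eta2 p k2 umin (xi t) (vi t) (vp t) (up t) u \<ge> 0"
    "b_cbf2 p delta k2 (xi t) (vi t) (xp t) (vp t) u \<ge> 0"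
    using assms(5) unfolding QP2_constraints_def by auto
  note rates =
    b_F_has_real_derivative[where xi = xi and vi = vi and xp = xp and vp = vp and up = up,
      OF assms(1-4)]
    b_eta2_has_real_derivative[where xi = xi and vi = vi and vp = vp and up = up,
      OF assms(1,2,4), where k = k2]
  show thesis
    by (rule that[OF rates(1) _ rates(2)]) (use constraints \<open>k2 \<ge> 0\<close> in auto)
qed

theorem theorem4:
  fixes L phi delta k2 umin umax dt t0 tm :: real
    and xi vi xp vp up ui c1 c2 :: "real \<Rightarrow> real"
  assumes L_pos: "L > 0" and phi_pos: "phi > 0" and k2_pos: "k2 > 0"
    and bounds: "umin < 0" "0 < umax" and umin_nonpos: "umin \<le> 0"
    and dt_pos: "dt > 0" and times: "t0 \<le> tm"
    and enter: "xi t0 = 0" and merge: "xi tm = L"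
    and range: "\<And>t. t \<in> {t0..tm} \<Longrightarrow> 0 \<le> xi t \<and> xi t \<le> L"
    and dyn_xi: "\<And>t. t \<in> {t0..<tm} \<Longrightarrow> (xi has_real_derivative vi t) (at t within {t..})"
    and dyn_vi: "\<And>t. t \<in> {t0..<tm} \<Longrightarrow> (vi has_real_derivative ui t) (at t within {t..})"
    and dyn_xp: "\<And>t. t \<in> {t0..<tm} \<Longrightarrow> (xp has_real_derivative vp t) (at t within {t..})"
    and dyn_vp: "\<And>t. t \<in> {t0..<tm} \<Longrightarrow> (vp has_real_derivative up t) (at t within {t..})"
    and hold: "\<And>(k::nat) s. t0 + real k * dt \<le> s \<Longrightarrow> s < t0 + real (k + 1) * dt \<Longrightarrow>
                 ui s = ui (t0 + real k * dt)"
    and A1: "\<And>t. up t \<ge> umin"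
    and v_nonneg: "\<And>t. vi t \<ge> 0"
    and SA_b2: "\<And>(k::nat) d. let t = t0 + real k * dt in
        ((\<lambda>s. merge_b2 (phi / L) delta (xi s) (vi s) (xp s) (vp s)) has_real_derivative d)
          (at t within {t..}) \<longrightarrow>
        merge_b2 (phi / L) delta (xi t) (vi t) (xp t) (vp t) \<ge> 0 \<longrightarrow>
        d + k2 * merge_b2 (phi / L) delta (xi t) (vi t) (xp t) (vp t) \<ge> 0 \<longrightarrow>
        merge_b2 (phi / L) delta (xi (t + dt)) (vi (t + dt)) (xp (t + dt)) (vp (t + dt)) \<ge> 0"
    and SA_bF: "\<And>(k::nat) d. let t = t0 + real k * dt in
        ((\<lambda>s. b_F (phi / L) delta k2 umin (xi s) (vi s) (xp s) (vp s)) has_real_derivative d)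
          (at t within {t..}) \<longrightarrow>
        b_F (phi / L) delta k2 umin (xi t) (vi t) (xp t) (vp t) \<ge> 0 \<longrightarrow>
        d + k2 * b_F (phi / L) delta k2 umin (xi t) (vi t) (xp t) (vp t) \<ge> 0 \<longrightarrow>
        b_F (phi / L) delta k2 umin (xi (t + dt)) (vi (t + dt)) (xp (t + dt)) (vp (t + dt)) \<ge> 0"
    and SA_beta2: "\<And>(k::nat) d. let t = t0 + real k * dt in
        ((\<lambda>s. b_eta2 (phi / L) umin (xi s) (vi s) (vp s)) has_real_derivative d)
          (at t within {t..}) \<longrightarrow>
        b_eta2 (phi / L) umin (xi t) (vi t) (vp t) \<ge> 0 \<longrightarrow>
        d + k2 * b_eta2 (phi / L) umin (xi t) (vi t) (vp t) \<ge> 0 \<longrightarrow>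
        b_eta2 (phi / L) umin (xi (t + dt)) (vi (t + dt)) (vp (t + dt)) \<ge> 0"
    and A4: "merge_b2 (phi / L) delta (xi t0) (vi t0) (xp t0) (vp t0) \<ge> 0"
            "b_F (phi / L) delta k2 umin (xi t0) (vi t0) (xp t0) (vp t0) \<ge> 0"
            "b_eta2 (phi / L) umin (xi t0) (vi t0) (vp t0) \<ge> 0"
    and applied: "\<And>(k::nat). let t = t0 + real k * dt in
        QP2_feasible (phi / L) delta k2 umin umax (c1 t) (c2 t) (xi t) (vi t) (xp t) (vp t) (up t)
        \<longrightarrow> (\<exists>e. QP2_constraints (phi / L) delta k2 umin umax (c1 t) (c2 t)
                    (xi t) (vi t) (xp t) (vp t) (up t) (ui t) e)"
  shows "\<forall>k::nat. t0 + real (k + 1) * dt \<le> tm \<longrightarrow>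
           (let t = t0 + real k * dt in
             QP2_feasible (phi / L) delta k2 umin umax (c1 t) (c2 t) (xi t) (vi t) (xp t) (vp t) (up t))"
proof -
  define inv where "inv t \<longleftrightarrow>
      b_F (phi / L) delta k2 umin (xi t) (vi t) (xp t) (vp t) \<ge> 0 \<and>
      b_eta2 (phi / L) umin (xi t) (vi t) (vp t) \<ge> 0" for t
  have phi_L: "phi / L \<ge> 0"
    using L_pos phi_pos by simp
  have feasible: "QP2_feasible (phi / L) delta k2 umin umax (c1 t) (c2 t)
      (xi t) (vi t) (xp t) (vp t) (up t)" if "inv t" for t
    using that phi_L k2_pos bounds A1 v_nonneg unfolding inv_def
    by (intro QP2_feasible_umin) auto
  have "t0 + real k * dt < tm \<longrightarrow> inv (t0 + real k * dt)" for k
  proof (induction k)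
    case 0
    show ?case
      using A4 unfolding inv_def by simp
  next
    case (Suc k)
    define t where "t = t0 + real k * dt"
    show ?case
    proof
      assume "t0 + real (Suc k) * dt < tm"
      then have t: "t \<in> {t0..<tm}" "t + dt = t0 + real (Suc k) * dt"
        using dt_pos unfolding t_def by (auto simp: algebra_simps)
      with Suc.IH have "inv t"
        unfolding t_def by simp
      with applied[of k] feasible obtain e where "QP2_constraints (phi / L) delta k2 umin umax
          (c1 t) (c2 t) (xi t) (vi t) (xp t) (vp t) (up t) (ui t) e"
        unfolding t_def Let_def by blast
      then show "inv (t0 + real (Suc k) * dt)"
        using SA_bF[of k] SA_beta2[of k] \<open>inv t\<close> k2_pos
        unfolding inv_def t(2)[symmetric] t_def[symmetric] Let_def
        by (elim QP2_constraints_imp_barrier_conditions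
            [where xi = xi and vi = vi and xp = xp and vp = vp and up = up,
             OF dyn_xi[OF t(1)] dyn_vi[OF t(1)] dyn_xp[OF t(1)] dyn_vp[OF t(1)]]) auto
    qed
  qed
  then show ?thesis
    using feasible dt_pos by (auto simp: Let_def algebra_simps)
qed

end
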